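(* Let $(p,q)=(6/5,6)$. Then for every $x \in [0,\pi_{6/5,6}/4]$, \[ \sin_{6/5,6}{(2x)} =\frac{2^{1/6}\sin_{6/5,6}{x}\,\cos_{6/5,6}^{1/5}{x}\left(3+\sqrt{1+32\sin_{6/5,6}^6{x}\, \cos_{6/5,6}^{6/5}{x}}\right)^{1/2}}{\left(1+32\sin_{6/5,6}^6{x}\,\cos_{6/5,6}^{6/5}{x}\right)^{1/4} \left(1+\sqrt{1+32\sin_{6/5,6}^6{x}\,\cos_{6/5,6}^{6/5}{x}}\right)^{1/6}}. \]
   Context: For $1<p,q<\infty$ let $F_{p,q}(x)=\int_0^x (1-t^q)^{-1/p}\,dt$ for $x\in[0,1]$, and $\pi_{p,q}=2F_{p,q}(1)$. The generalized sine $\sin_{p,q}$ is defined on $[0,\pi_{p,q}/2]$ as the inverse function of $F_{p,q}$ (an increasing function onto $[0,1]$), extended to $(\pi_{p,q}/2,\pi_{p,q}]$ by $\sin_{p,q}x=\sin_{p,q}(\pi_{p,q}-x)$, and to all of $\mathbb{R}$ as an odd $2\pi_{p,q}$-periodic function. It is $C^1$, and the generalized cosine is $\cos_{p,q}x := \frac{d}{dx}\sin_{p,q}x$; it satisfies $|\cos_{p,q}x|^p+|\sin_{p,q}x|^q=1$, and $\cos_{p,q}x\ge 0$ on $[0,\pi_{p,q}/2]$. *)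

theory Defs
  imports "HOL-Analysis.Analysis"
begin

definition F_pq :: "real \<Rightarrow> real \<Rightarrow> real \<Rightarrow> real" where
  "F_pq p q x = integral {0..x} (\<lambda>t. (1 - t powr q) powr (- 1 / p))"

definition pi_pq :: "real \<Rightarrow> real \<Rightarrow> real" where
  "pi_pq p q = 2 * F_pq p q 1"

definition sin_pq_base :: "real \<Rightarrow> real \<Rightarrow> real \<Rightarrow> real" where
  "sin_pq_base p q x = (THE y. y \<in> {0..1} \<and> F_pq p q y = x)"

text \<open>On [0, pi]: symmetric about pi/2.\<close>
definition sin_pq_half :: "real \<Rightarrow> real \<Rightarrow> real \<Rightarrow> real" where
  "sin_pq_half p q x = (if x \<le> pi_pq p q / 2 then sin_pq_base p q x
                        else sin_pq_base p q (pi_pq p q - x))"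

text \<open>Odd, 2 pi_{p,q}-periodic extension to all of R.\<close>
definition sin_pq :: "real \<Rightarrow> real \<Rightarrow> real \<Rightarrow> real" where
  "sin_pq p q x =
     (let P = pi_pq p q;
          y = x - 2 * P * of_int \<lfloor>(x + P) / (2 * P)\<rfloor>
      in if 0 \<le> y then sin_pq_half p q y else - sin_pq_half p q (- y))"

definition cos_pq :: "real \<Rightarrow> real \<Rightarrow> real \<Rightarrow> real" where
  "cos_pq p q x = deriv (sin_pq p q) x"

end

theory Submission
  imports Defs
begin

(* Write F = F_pq (6/5) 6, so F' y = (1 - y^6) powr (-5/6) on (0,1) and sin_pq (6/5) 6
   inverts F on [0,1]. For r = duplication_sqrt s and G = duplication_rat r we have
   r^2 = 9 - 8 (1 - 2 s^6)^2, and with k = 2 s (1 - 2 s^6) / r one finds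
     G (1 - G) = (1 - s^6) k^6   and   G' = 12 k^5.
   For duplication s = G^(1/6) this gives
     (F o duplication)' = G' / (6 (G (1 - G)) powr (5/6)) = 2 F',
   so F (duplication s) = 2 F s whenever s^6 <= 1/2. As duplication (2 powr (-1/6)) = 1, this
   gives pi_pq (6/5) 6 = 4 F (2 powr (-1/6)) and sin (2 x) = duplication (sin x) for
   0 <= x <= pi_pq (6/5) 6 / 4. Substituting cos x = (1 - s^6) powr (5/6) for s = sin x, the
   stated right-hand side has sixth power G, i.e. it is duplication s. *)

definition F_pq_integrand :: "real \<Rightarrow> real \<Rightarrow> real \<Rightarrow> real" where
  "F_pq_integrand p q t = (1 - t powr q) powr (- 1 / p)"

lemma F_pq_eq_integral: "F_pq p q x = integral {0..x} (F_pq_integrand p q)"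
  by (simp add: F_pq_def F_pq_integrand_def[abs_def])

lemma F_pq_0 [simp]: "F_pq p q 0 = 0"
  by (simp add: F_pq_def)

lemma powr_le_self:
  fixes t q :: real
  assumes "0 \<le> t" "t \<le> 1" "1 \<le> q"
  shows "t powr q \<le> t"
  using assms powr_le_one_le[of t q] by (cases "t = 0") auto

lemma powr_frac_power:
  fixes a :: real
  assumes "0 < a" "0 < m"
  shows "(a powr (real n / real m)) ^ m = a ^ n"
  using assms by (simp add: powr_power powr_realpow)

locale pq_exponents =
  fixes p q :: real
  assumes p_gt_1: "1 < p" and q_ge_1: "1 \<le> q"
begin

lemma F_pq_integrand_ge_1:
  assumes "0 \<le> t" "t < 1"
  shows "1 \<le> F_pq_integrand p q t"
proof -
  have "0 < 1 - t powr q" "1 - t powr q \<le> 1"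
    using assms powr_le_self[OF _ _ q_ge_1, of t] by auto
  then have "1 powr (- 1 / p) \<le> (1 - t powr q) powr (- 1 / p)"
    using p_gt_1 by (intro powr_mono2') auto
  then show ?thesis by (simp add: F_pq_integrand_def)
qed

lemma F_pq_integrand_le:
  assumes "0 \<le> t" "t < 1"
  shows "F_pq_integrand p q t \<le> (1 - t) powr (- 1 / p)"
proof -
  have "t powr q \<le> t"
    using assms q_ge_1 by (intro powr_le_self) auto
  then show ?thesis
    unfolding F_pq_integrand_def using assms p_gt_1 by (intro powr_mono2') auto
qed

lemma continuous_on_F_pq_integrand: "continuous_on {0..<1} (F_pq_integrand p q)"
  unfolding F_pq_integrand_def[abs_def]
proof (rule continuous_on_powr[OF continuous_on_diff[OF continuous_on_const]
      continuous_on_const ballI])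
  show "continuous_on {0..<1} (\<lambda>t. t powr q)"
    using q_ge_1 by (intro continuous_on_powr' continuous_intros) auto
  show "1 - t powr q \<noteq> 0" if "t \<in> {0..<1}" for t
    using that powr_le_self[OF _ _ q_ge_1, of t] by auto
qed

lemma integrable_F_pq_integrand: "F_pq_integrand p q integrable_on {0..1}"
proof -
  have "(\<lambda>t. t powr (- 1 / p)) integrable_on cbox 0 1"
    using p_gt_1 integrable_on_powr_from_0[of "- 1 / p" 1] by simp
  from integrable_affinity[OF this, of "-1" 1]
  have "(\<lambda>t. (1 - t) powr (- 1 / p)) integrable_on {0..1}"
    by simp
  then show ?thesis
  proof (rule measurable_bounded_by_integrable_imp_integrable_real[rotated])
    show "F_pq_integrand p q \<in> borel_measurable (lebesgue_on {0..1})"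
      unfolding F_pq_integrand_def[abs_def]
      by measurable (auto intro: continuous_imp_measurable_on_sets_lebesgue continuous_on_id)
    show "\<bar>F_pq_integrand p q t\<bar> \<le> (1 - t) powr (- 1 / p)" if "t \<in> {0..1}" for t
      \<comment> \<open>at t = 1 both sides vanish, since 0 powr a = 0\<close>
      using that F_pq_integrand_ge_1 F_pq_integrand_le
      by (cases "t = 1") (fastforce simp: F_pq_integrand_def)+
  qed auto
qed

lemma continuous_on_F_pq: "continuous_on {0..1} (F_pq p q)"
  unfolding F_pq_eq_integral[abs_def]
  by (rule indefinite_integral_continuous_1[OF integrable_F_pq_integrand])

lemma F_pq_diff:
  assumes "0 \<le> a" "a \<le> b" "b \<le> 1"
  shows "F_pq p q b - F_pq p q a = integral {a..b} (F_pq_integrand p q)"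
  using assms integrable_on_subinterval[OF integrable_F_pq_integrand, of 0 b]
    Henstock_Kurzweil_Integration.integral_combine
      [where a = 0 and c = a and b = b and f = "F_pq_integrand p q"]
  by (simp add: F_pq_eq_integral)

lemma F_pq_strict_mono: "strict_mono_on {0..1} (F_pq p q)"
proof (rule strict_mono_onI)
  fix a b :: real
  assume "a \<in> {0..1}" "b \<in> {0..1}" "a < b"
  then have ab: "0 \<le> a" "a < b" "b \<le> 1" by auto
  \<comment> \<open>the integrand is at least 1 only on [0,1), so compare on [a,c], c < 1\<close>
  define c where "c = (a + b) / 2"
  have c: "a < c" "c < b" "c < 1" using ab by (auto simp: c_def)
  have "c - a = integral {a..c} (\<lambda>_. 1)" using c by simp
  also have "\<dots> \<le> integral {a..c} (F_pq_integrand p q)"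
    using ab c integrable_on_subinterval[OF integrable_F_pq_integrand, of a c]
    by (intro integral_le) (auto intro!: F_pq_integrand_ge_1)
  also have "\<dots> = F_pq p q c - F_pq p q a" using ab c by (simp add: F_pq_diff)
  finally have "c - a \<le> F_pq p q c - F_pq p q a" .
  moreover have "0 \<le> integral {c..b} (F_pq_integrand p q)"
    using ab c integrable_on_subinterval[OF integrable_F_pq_integrand, of c b]
    by (intro integral_nonneg) (auto simp: F_pq_integrand_def)
  ultimately show "F_pq p q a < F_pq p q b" using ab c F_pq_diff[of c b] by simp
qed

lemma F_pq_has_real_derivative:
  assumes "0 < y" "y < 1"
  shows "(F_pq p q has_real_derivative F_pq_integrand p q y) (at y)"
proof -
  define b where "b = (1 + y) / 2"
  have "(F_pq p q has_real_derivative F_pq_integrand p q y) (at y within {0..b})"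
    unfolding F_pq_eq_integral[abs_def] using assms
    by (intro integral_has_real_derivative continuous_on_subset[OF continuous_on_F_pq_integrand])
      (auto simp: b_def)
  moreover have "at y within {0..b} = at y"
    using assms by (intro at_within_Icc_at) (auto simp: b_def)
  ultimately show ?thesis by simp
qed

lemma pi_pq_pos: "0 < pi_pq p q"
  using strict_mono_onD[OF F_pq_strict_mono, of 0 1] by (simp add: pi_pq_def)

lemma F_pq_image: "F_pq p q ` {0..1} = {0..pi_pq p q / 2}"
proof
  show "F_pq p q ` {0..1} \<subseteq> {0..pi_pq p q / 2}"
    using strict_mono_on_leD[OF F_pq_strict_mono] F_pq_0[of p q] by (fastforce simp: pi_pq_def)
  show "{0..pi_pq p q / 2} \<subseteq> F_pq p q ` {0..1}"
    using IVT'[of "F_pq p q" 0 _ 1] continuous_on_F_pq F_pq_0[of p q]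
    by (fastforce simp: pi_pq_def)
qed

lemma sin_pq_eq_sin_pq_base:
  assumes "0 \<le> x" "x \<le> pi_pq p q / 2"
  shows "sin_pq p q x = sin_pq_base p q x"
proof -
  have "\<lfloor>(x + pi_pq p q) / (2 * pi_pq p q)\<rfloor> = 0"
    using assms pi_pq_pos by (simp add: floor_eq_iff field_simps)
  then show ?thesis
    using assms by (simp add: sin_pq_def sin_pq_half_def Let_def)
qed

lemma sin_pq_F_pq:
  assumes "y \<in> {0..1}"
  shows "sin_pq p q (F_pq p q y) = y"
proof -
  have "sin_pq_base p q (F_pq p q y) = y"
    unfolding sin_pq_base_def
    using assms strict_mono_on_eqD[OF F_pq_strict_mono] by (intro the_equality) auto
  then show ?thesis
    using assms F_pq_image by (subst sin_pq_eq_sin_pq_base) auto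
qed

lemma cos_pq_F_pq:
  assumes "0 < y" "y < 1"
  shows "cos_pq p q (F_pq p q y) = (1 - y powr q) powr (1 / p)"
proof -
  have x: "0 < F_pq p q y" "F_pq p q y < pi_pq p q / 2"
    using assms strict_mono_onD[OF F_pq_strict_mono, of 0 y]
      strict_mono_onD[OF F_pq_strict_mono, of y 1]
    by (auto simp: pi_pq_def)
  have inverse: "F_pq p q (sin_pq p q z) = z" if "0 < z" "z < pi_pq p q / 2" for z
  proof -
    have "z \<in> F_pq p q ` {0..1}" using that by (simp add: F_pq_image)
    then show ?thesis by (auto simp: sin_pq_F_pq)
  qed
  have cont: "isCont (sin_pq p q) (F_pq p q y)"
  proof (rule isCont_inverse_function2[of "y / 2" y "(1 + y) / 2"])
    fix z assume "y / 2 \<le> z" "z \<le> (1 + y) / 2"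
    with assms show "sin_pq p q (F_pq p q z) = z" "isCont (F_pq p q) z"
      by (auto intro!: sin_pq_F_pq DERIV_isCont F_pq_has_real_derivative)
  qed (use assms in auto)
  have "(F_pq p q has_real_derivative F_pq_integrand p q y) (at (sin_pq p q (F_pq p q y)))"
    using assms by (simp add: sin_pq_F_pq F_pq_has_real_derivative)
  then have "(sin_pq p q has_real_derivative inverse (F_pq_integrand p q y)) (at (F_pq p q y))"
    using F_pq_integrand_ge_1[of y] assms
    by (intro DERIV_inverse_function[OF _ _ x inverse cont]) auto
  then show ?thesis
    by (simp add: cos_pq_def DERIV_imp_deriv F_pq_integrand_def powr_minus divide_inverse)
qed

end

interpretation pq_6: pq_exponents "6/5" 6
  by unfold_locales auto

lemma F_pq_integrand_6:
  assumes "0 \<le> t"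
  shows "F_pq_integrand (6/5) 6 t = (1 - t^6) powr (- 5/6)"
  using assms by (cases "t = 0") (simp_all add: F_pq_integrand_def powr_realpow)

definition duplication_sqrt :: "real \<Rightarrow> real" where
  "duplication_sqrt s = sqrt (1 + 32 * s^6 * (1 - s^6))"

definition duplication_rat :: "real \<Rightarrow> real" where
  "duplication_rat r = (r - 1) * (r + 3)^3 / (16 * r^3)"

definition duplication :: "real \<Rightarrow> real" where
  "duplication s = root 6 (duplication_rat (duplication_sqrt s))"

lemma duplication_sqrt_sq:
  assumes "s^6 \<le> 1"
  shows "(duplication_sqrt s)^2 = 1 + 32 * s^6 * (1 - s^6)"
  using assms by (simp add: duplication_sqrt_def)

lemma duplication_sqrt_bounds:
  assumes "s^6 \<le> 1"
  shows "duplication_sqrt s \<in> {1..3}"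
proof -
  have "0 \<le> s^6 * (1 - s^6)" using assms by simp
  moreover have "s^6 * (1 - s^6) \<le> 1/4"
    using zero_le_power2[of "2 * s^6 - 1"] by (simp only: power2_eq_square) argo
  ultimately have "sqrt 1 \<le> duplication_sqrt s" "duplication_sqrt s \<le> sqrt (3^2)"
    unfolding duplication_sqrt_def by (intro real_sqrt_le_mono; simp)+
  then show ?thesis by simp
qed

lemma duplication_sqrt_strict_bounds:
  assumes "0 < s^6" "s^6 < 1/2"
  shows "duplication_sqrt s \<in> {1<..<3}"
proof -
  have "0 < s^6 * (1 - s^6)" using assms by simp
  moreover have "s^6 * (1 - s^6) < 1/4"
    using assms zero_less_power2[of "2 * s^6 - 1"] by (simp only: power2_eq_square) argo
  ultimately have "sqrt 1 < duplication_sqrt s" "duplication_sqrt s < sqrt (3^2)"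
    unfolding duplication_sqrt_def by (intro real_sqrt_less_mono; simp)+
  then show ?thesis by simp
qed

lemma one_minus_duplication_rat:
  assumes "r \<noteq> 0"
  shows "1 - duplication_rat r = (3 - r)^3 * (r + 1) / (16 * r^3)"
  using assms unfolding duplication_rat_def by (simp add: field_simps) algebra

lemma duplication_rat_bounds:
  assumes "r \<in> {1..3}"
  shows "duplication_rat r \<in> {0..1}"
proof -
  have "1 - duplication_rat r = (3 - r)^3 * (r + 1) / (16 * r^3)"
    using assms by (intro one_minus_duplication_rat) auto
  moreover have "0 \<le> (3 - r)^3 * (r + 1) / (16 * r^3)" "0 \<le> duplication_rat r"
    using assms by (auto simp: duplication_rat_def)
  ultimately show ?thesis by simp
qed

lemma duplication_rat_strict_bounds:
  assumes "r \<in> {1<..<3}"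
  shows "duplication_rat r \<in> {0<..<1}"
proof -
  have "1 - duplication_rat r = (3 - r)^3 * (r + 1) / (16 * r^3)"
    using assms by (intro one_minus_duplication_rat) auto
  moreover have "0 < (3 - r)^3 * (r + 1) / (16 * r^3)" "0 < duplication_rat r"
    using assms by (auto simp: duplication_rat_def)
  ultimately show ?thesis by simp
qed

lemma duplication_rat_mult_one_minus:
  assumes "r \<noteq> 0"
  shows "duplication_rat r * (1 - duplication_rat r) = (r^2 - 1) * (9 - r^2)^3 / (256 * r^6)"
  using assms unfolding one_minus_duplication_rat[OF assms]
  by (simp add: duplication_rat_def field_simps) algebra

lemma duplication_rat_has_real_derivative:
  assumes "r \<noteq> 0"
  shows "(duplication_rat has_real_derivative (9 - r^2)^2 / (16 * r^4)) (at r)"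
  unfolding duplication_rat_def[abs_def]
  using assms by (auto intro!: derivative_eq_intros simp: field_simps) algebra

lemma duplication_sqrt_has_real_derivative:
  assumes "s^6 \<le> 1"
  shows "(duplication_sqrt has_real_derivative
      96 * s^5 * (1 - 2 * s^6) / duplication_sqrt s) (at s)"
proof -
  have "0 < 1 + 32 * s^6 * (1 - s^6)" using assms by (simp add: add_pos_nonneg)
  then show ?thesis
    unfolding duplication_sqrt_def[abs_def]
    by (auto intro!: derivative_eq_intros simp: field_simps)
qed

lemma nine_minus_duplication_sqrt_sq:
  assumes "s^6 \<le> 1"
  shows "9 - (duplication_sqrt s)^2 = 8 * (1 - 2 * s^6)^2"
  unfolding duplication_sqrt_sq[OF assms] by (simp add: power2_eq_square algebra_simps)

lemma duplication_rat_sqrt_has_real_derivative: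
  assumes "s^6 \<le> 1"
  shows "((\<lambda>s. duplication_rat (duplication_sqrt s)) has_real_derivative
      12 * (2 * s * (1 - 2 * s^6) / duplication_sqrt s)^5) (at s)"
proof -
  define r where "r = duplication_sqrt s"
  have r: "1 \<le> r" using duplication_sqrt_bounds[OF assms] by (simp add: r_def)
  have "((\<lambda>s. duplication_rat (duplication_sqrt s)) has_real_derivative
      (9 - r^2)^2 / (16 * r^4) * (96 * s^5 * (1 - 2 * s^6) / r)) (at s)"
    unfolding r_def using r
    by (intro DERIV_chain2[OF duplication_rat_has_real_derivative
          duplication_sqrt_has_real_derivative[OF assms]]) (auto simp: r_def)
  also have "(9 - r^2)^2 / (16 * r^4) * (96 * s^5 * (1 - 2 * s^6) / r)
      = 12 * (2 * s * (1 - 2 * s^6) / r)^5"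
    unfolding r_def nine_minus_duplication_sqrt_sq[OF assms] using r
    by (simp add: r_def field_simps eval_nat_numeral)
  finally show ?thesis by (simp add: r_def)
qed

lemma duplication_rat_sqrt_mult_one_minus:
  assumes "s^6 \<le> 1"
  shows "duplication_rat (duplication_sqrt s) * (1 - duplication_rat (duplication_sqrt s))
      = (1 - s^6) * (2 * s * (1 - 2 * s^6) / duplication_sqrt s)^6"
proof -
  define r where "r = duplication_sqrt s"
  have r: "1 \<le> r" using duplication_sqrt_bounds[OF assms] by (simp add: r_def)
  have "r^2 - 1 = 32 * s^6 * (1 - s^6)"
    using duplication_sqrt_sq[OF assms] by (simp add: r_def)
  moreover have "9 - r^2 = 8 * (1 - 2 * s^6)^2"
    using nine_minus_duplication_sqrt_sq[OF assms] by (simp add: r_def)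
  ultimately have "duplication_rat r * (1 - duplication_rat r)
      = 32 * s^6 * (1 - s^6) * (8 * (1 - 2 * s^6)^2)^3 / (256 * r^6)"
    using r duplication_rat_mult_one_minus[of r] by simp
  also have "\<dots> = (1 - s^6) * (2 * s * (1 - 2 * s^6) / r)^6"
    by (simp add: power_divide power_mult_distrib flip: power_mult)
  finally show ?thesis by (simp add: r_def)
qed

lemma F_pq_6_root_6_has_real_derivative:
  assumes G: "(G has_real_derivative G') (at s)" and "0 < G s" "G s < 1"
  shows "((\<lambda>s. F_pq (6/5) 6 (root 6 (G s))) has_real_derivative
      G' / (6 * (G s * (1 - G s)) powr (5/6))) (at s)"
proof -
  have root_pow_5: "root 6 (G s) ^ 5 = G s powr (5/6)"
    using assms by (simp add: root_powr_inverse powr_realpow[symmetric] powr_powr)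
  have "((\<lambda>s. F_pq (6/5) 6 (root 6 (G s))) has_real_derivative
      F_pq_integrand (6/5) 6 (root 6 (G s)) * (inverse (real 6 * root 6 (G s) ^ (6 - Suc 0)) * G'))
      (at s)"
    using assms
    by (intro DERIV_chain2[OF pq_6.F_pq_has_real_derivative DERIV_chain2[OF DERIV_real_root G]])
      auto
  also have "F_pq_integrand (6/5) 6 (root 6 (G s)) = (1 - G s) powr (- 5/6)"
    using assms by (simp add: F_pq_integrand_6 real_root_pow_pos2)
  also have "(1 - G s) powr (- 5/6) * (inverse (real 6 * root 6 (G s) ^ (6 - Suc 0)) * G')
      = G' / (6 * (G s * (1 - G s)) powr (5/6))"
    using assms by (simp add: root_pow_5 powr_mult powr_minus) (simp add: field_simps)
  finally show ?thesis .
qed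

lemma F_duplication_has_real_derivative:
  assumes "0 < s" "s^6 < 1/2"
  shows "((\<lambda>s. F_pq (6/5) 6 (duplication s)) has_real_derivative
      2 * F_pq_integrand (6/5) 6 s) (at s)"
proof -
  define G where "G s = duplication_rat (duplication_sqrt s)" for s
  define k where "k = 2 * s * (1 - 2 * s^6) / duplication_sqrt s"
  have s6: "s^6 \<le> 1" using assms by simp
  have r: "duplication_sqrt s \<in> {1<..<3}"
    using assms by (intro duplication_sqrt_strict_bounds) auto
  then have G: "G s \<in> {0<..<1}"
    unfolding G_def by (rule duplication_rat_strict_bounds)
  have "0 < 1 - 2 * s^6" using assms by simp
  then have k: "0 < k"
    unfolding k_def using assms r by (intro divide_pos_pos mult_pos_pos) auto
  have "(G has_real_derivative 12 * k^5) (at s)"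
    unfolding G_def[abs_def] k_def by (rule duplication_rat_sqrt_has_real_derivative[OF s6])
  then have "((\<lambda>s. F_pq (6/5) 6 (root 6 (G s))) has_real_derivative
      12 * k^5 / (6 * (G s * (1 - G s)) powr (5/6))) (at s)"
    using G by (intro F_pq_6_root_6_has_real_derivative) auto
  also have "(\<lambda>s. root 6 (G s)) = duplication"
    by (simp add: fun_eq_iff duplication_def G_def)
  also have "G s * (1 - G s) = (1 - s^6) * k^6"
    unfolding G_def k_def by (rule duplication_rat_sqrt_mult_one_minus[OF s6])
  also have "((1 - s^6) * k^6) powr (5/6) = (1 - s^6) powr (5/6) * k^5"
  proof -
    have "(k^6) powr (5/6) = (k powr 6) powr (5/6)" using k by simp
    also have "\<dots> = k^5" using k by (subst powr_powr) simp
    finally show ?thesis using s6 k by (simp add: powr_mult)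
  qed
  also have "12 * k^5 / (6 * ((1 - s^6) powr (5/6) * k^5)) = 2 * F_pq_integrand (6/5) 6 s"
    using k assms by (simp add: F_pq_integrand_6 powr_minus divide_simps)
  finally show ?thesis .
qed

lemma duplication_bounds:
  assumes "s^6 \<le> 1"
  shows "duplication s \<in> {0..1}"
  using duplication_rat_bounds[OF duplication_sqrt_bounds[OF assms]]
  by (simp add: duplication_def)

lemma continuous_on_duplication: "continuous_on {0..1} duplication"
proof -
  have "continuous_on {0..1} (\<lambda>s. duplication_rat (duplication_sqrt s))"
    unfolding duplication_rat_def duplication_sqrt_def
  proof (intro continuous_intros ballI)
    fix s :: real assume "s \<in> {0..1}"
    then have "duplication_sqrt s \<in> {1..3}"
      by (intro duplication_sqrt_bounds) (simp add: power_le_one)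
    then show "16 * sqrt (1 + 32 * s^6 * (1 - s^6)) ^ 3 \<noteq> 0"
      by (auto simp: duplication_sqrt_def)
  qed
  then show ?thesis
    unfolding duplication_def[abs_def] by (intro continuous_intros)
qed

lemma duplication_0: "duplication 0 = 0"
  by (simp add: duplication_def duplication_sqrt_def duplication_rat_def)

lemma duplication_root_6_half: "duplication (root 6 (1/2)) = 1"
proof -
  have "1 + 32 * (1/2) * (1 - 1/2) = (3::real)^2" by simp
  then have "duplication_sqrt (root 6 (1/2)) = 3"
    unfolding duplication_sqrt_def by (simp only: real_root_pow_pos2) simp
  then show ?thesis by (simp add: duplication_def duplication_rat_def)
qed

lemma F_duplication:
  assumes "0 \<le> s" "s^6 \<le> 1/2"
  shows "F_pq (6/5) 6 (duplication s) = 2 * F_pq (6/5) 6 s"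
proof (cases "s = 0")
  case True
  then show ?thesis by (simp add: duplication_0)
next
  case False
  define \<Phi> where "\<Phi> t = F_pq (6/5) 6 (duplication t) - 2 * F_pq (6/5) 6 t" for t
  have "s^6 \<le> 1" using assms by simp
  then have s: "0 < s" "s \<le> 1" using assms False by (auto simp: power_le_one_iff)
  have "duplication ` {0..s} \<subseteq> {0..1}"
    using s by (auto intro!: duplication_bounds power_le_one)
  then have "continuous_on {0..s} (\<lambda>t. F_pq (6/5) 6 (duplication t))"
    using s by (intro continuous_on_compose2[OF pq_6.continuous_on_F_pq]
        continuous_on_subset[OF continuous_on_duplication]) auto
  then have "continuous_on {0..s} \<Phi>"
    unfolding \<Phi>_def using s
    by (intro continuous_intros continuous_on_subset[OF pq_6.continuous_on_F_pq]) auto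
  moreover have "(\<Phi> has_real_derivative 0) (at t)" if "0 < t" "t < s" for t
  proof -
    have "t^6 < 1/2"
      using that assms power_strict_mono[of t s 6] by simp
    then have "((\<lambda>t. F_pq (6/5) 6 (duplication t)) has_real_derivative
        2 * F_pq_integrand (6/5) 6 t) (at t)"
      using that by (intro F_duplication_has_real_derivative)
    moreover have "(F_pq (6/5) 6 has_real_derivative F_pq_integrand (6/5) 6 t) (at t)"
      using that s by (intro pq_6.F_pq_has_real_derivative) auto
    ultimately have "((\<lambda>t. F_pq (6/5) 6 (duplication t) - 2 * F_pq (6/5) 6 t)
        has_real_derivative 2 * F_pq_integrand (6/5) 6 t - 2 * F_pq_integrand (6/5) 6 t) (at t)"
      by (intro DERIV_diff DERIV_cmult)
    then show ?thesis unfolding \<Phi>_def[abs_def] by simp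
  qed
  ultimately have "\<Phi> s = \<Phi> 0"
    using s by (intro DERIV_isconst_end) auto
  then show ?thesis by (simp add: \<Phi>_def duplication_0)
qed

lemma pi_pq_6: "pi_pq (6/5) 6 = 4 * F_pq (6/5) 6 (root 6 (1/2))"
  using F_duplication[of "root 6 (1/2)"] by (simp add: pi_pq_def duplication_root_6_half)

lemma duplication_closed_form:
  fixes s c :: real
  assumes "0 \<le> s" "s^6 < 1" and c: "c = (1 - s^6) powr (5/6)"
  shows "duplication s =
    2 powr (1/6) * s * c powr (1/5) * (3 + sqrt (1 + 32 * s^6 * c powr (6/5))) powr (1/2)
    / ((1 + 32 * s^6 * c powr (6/5)) powr (1/4)
      * (1 + sqrt (1 + 32 * s^6 * c powr (6/5))) powr (1/6))"
    (is "_ = ?R")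
proof -
  define r where "r = duplication_sqrt s"
  have r: "1 \<le> r" using assms duplication_sqrt_bounds[of s] by (simp add: r_def)
  have radicand: "1 + 32 * s^6 * (1 - s^6) = r^2"
    using assms duplication_sqrt_sq[of s] by (simp add: r_def)
  have "c powr (6/5) = 1 - s^6" "c powr (1/5) = (1 - s^6) powr (1/6)"
    using assms by (simp_all add: powr_powr)
  moreover have "(r^2) powr (1/4) = r powr (1/2)"
    using r by (simp add: powr_powr flip: powr_numeral)
  ultimately have R: "?R = 2 powr (1/6) * s * (1 - s^6) powr (1/6) * (3 + r) powr (1/2)
      / (r powr (1/2) * (1 + r) powr (1/6))"
    using r by (simp only: radicand real_sqrt_abs)
  have "(2 powr (1/6))^6 = (2::real)" "((1 - s^6) powr (1/6))^6 = 1 - s^6"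
    "((3 + r) powr (1/2))^6 = (3 + r)^3" "(r powr (1/2))^6 = r^3" "((1 + r) powr (1/6))^6 = 1 + r"
    using assms r powr_frac_power[of _ 6 1] powr_frac_power[of _ 6 3] by simp_all
  then have "?R^6 = 2 * s^6 * (1 - s^6) * (3 + r)^3 / (r^3 * (1 + r))"
    unfolding R by (simp only: power_mult_distrib power_divide)
  also have "2 * s^6 * (1 - s^6) = (r - 1) * (r + 1) / 16"
    using radicand by (simp add: power2_eq_square algebra_simps)
  also have "(r - 1) * (r + 1) / 16 * (3 + r)^3 / (r^3 * (1 + r)) = duplication_rat r"
    using r by (simp add: duplication_rat_def divide_simps add.commute)
  finally have "?R^6 = duplication_rat r" .
  moreover have "0 \<le> ?R" using assms by simp
  ultimately show ?thesis
    by (simp add: duplication_def r_def real_root_pos_unique)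
qed

theorem theorem1p1:
  fixes x :: real
  assumes "0 \<le> x" and "x \<le> pi_pq (6/5) 6 / 4"
  shows "sin_pq (6/5) 6 (2 * x) =
    (2 powr (1/6) * sin_pq (6/5) 6 x * (cos_pq (6/5) 6 x) powr (1/5)
      * (3 + sqrt (1 + 32 * (sin_pq (6/5) 6 x) ^ 6 * (cos_pq (6/5) 6 x) powr (6/5))) powr (1/2))
    / ((1 + 32 * (sin_pq (6/5) 6 x) ^ 6 * (cos_pq (6/5) 6 x) powr (6/5)) powr (1/4)
      * (1 + sqrt (1 + 32 * (sin_pq (6/5) 6 x) ^ 6 * (cos_pq (6/5) 6 x) powr (6/5))) powr (1/6))"
proof -
  let ?F = "F_pq (6/5) 6" and ?y\<^sub>0 = "root 6 (1/2 :: real)"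
  have y\<^sub>0: "?y\<^sub>0 \<in> {0..1}" by simp
  have "x \<in> ?F ` {0..1}"
    using assms pq_6.pi_pq_pos by (simp add: pq_6.F_pq_image)
  then obtain s where s: "s \<in> {0..1}" "?F s = x" by blast
  have "s \<le> ?y\<^sub>0"
    using assms s y\<^sub>0 strict_mono_onD[OF pq_6.F_pq_strict_mono, of ?y\<^sub>0 s]
    by (force simp: pi_pq_6)
  then have s6: "s^6 \<le> 1/2"
    using s power_mono[of s ?y\<^sub>0 6] by simp
  then have "s < 1"
    using one_le_power[of s 6] by fastforce
  have sin_x: "sin_pq (6/5) 6 x = s"
    using s pq_6.sin_pq_F_pq by blast
  have "sin_pq (6/5) 6 (2 * x) = duplication s"
    using s s6 duplication_bounds[of s] pq_6.sin_pq_F_pq[of "duplication s"]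
    by (simp add: F_duplication)
  moreover have "cos_pq (6/5) 6 x = (1 - s^6) powr (5/6)" if "0 < s"
    using that s \<open>s < 1\<close> pq_6.cos_pq_F_pq[of s] by (simp add: powr_realpow)
  ultimately show ?thesis
    using s s6 sin_x duplication_closed_form[of s] by (cases "s = 0") (auto simp: duplication_0)
qed

end
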